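(* Let $0<q<1$. For complex numbers $a,b,c,d,\alpha,\beta,\gamma,\delta$ with $\mathrm{Re}(a+b+c+d+1+\alpha-\beta-\gamma-\delta)>0$, and such that every $q^2$-gamma value occurring below is evaluated at a point that is not a non-positive integer, put $A=2(a+b+c+d+1+\alpha-\beta-\gamma-\delta)$. Then \[ \sum_{n=0}^{\infty}\frac{(1-q^{4n+2a+2\alpha})(\alpha|q^{2})_{a+n}(\beta|q^{2})_{n-b}(\gamma|q^{2})_{n-c}(\delta|q^{2})_{n-d}}{(1-q^{2})[n]_{q^{2}}!\,(1+\alpha-\beta|q^{2})_{a+b+n}(1+\alpha-\gamma|q^{2})_{a+c+n}(1+\alpha-\delta|q^{2})_{a+d+n}}\,q^{An} \] \[ =\frac{\Gamma_{q^{2}}(1+\alpha-\beta)\Gamma_{q^{2}}(1+\alpha-\gamma)\Gamma_{q^{2}}(1+\alpha-\delta)\Gamma_{q^{2}}(2+\alpha-\beta-\gamma-\delta)}{\Gamma_{q^{2}}(\alpha)\Gamma_{q^{2}}(1+\alpha-\beta-\gamma)\Gamma_{q^{2}}(1+\alpha-\beta-\delta)\Gamma_{q^{2}}(1+\alpha-\gamma-\delta)} \times\frac{(\beta|q^{2})_{-b}(\gamma|q^{2})_{-c}(\delta|q^{2})_{-d}(2+\alpha-\beta-\gamma-\delta|q^{2})_{a+b+c+d-1}}{(1+\alpha-\beta-\gamma|q^{2})_{a+b+c}(1+\alpha-\beta-\delta|q^{2})_{a+b+d}(1+\alpha-\gamma-\delta|q^{2})_{a+c+d}}. \]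
   Context: Let $0<q<1$ and write $q^{x}=e^{x\log q}$ for complex $x$. Set $(z;q)_\infty=\prod_{k\ge0}(1-zq^k)$. The $q^2$-gamma function is $\Gamma_{q^2}(x)=\frac{(q^2;q^2)_\infty}{(q^{2x};q^2)_\infty}(1-q^2)^{1-x}$. For complex $x,\alpha$, the general $q$-shifted factorial is $(x|q^2)_\alpha=\Gamma_{q^2}(x+\alpha)/\Gamma_{q^2}(x)$. The $q$-integer is $[z]_{q^2}=\frac{1-q^{2z}}{1-q^2}$, and $[0]_{q^2}!=1$, $[n]_{q^2}!=\prod_{k=1}^n[k]_{q^2}$. *)

theory Defs
  imports "HOL-Analysis.Analysis"
begin

definition qpow :: "real \<Rightarrow> complex \<Rightarrow> complex" where
  "qpow p x = exp (x * complex_of_real (ln p))"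

definition qpoch_inf :: "complex \<Rightarrow> real \<Rightarrow> complex" where
  "qpoch_inf z p = (\<Prod>k. 1 - z * complex_of_real (p ^ k))"

definition qgamma :: "real \<Rightarrow> complex \<Rightarrow> complex" where
  "qgamma p x = qpoch_inf (complex_of_real p) p / qpoch_inf (qpow p x) p * qpow (1 - p) (1 - x)"

definition qshift :: "real \<Rightarrow> complex \<Rightarrow> complex \<Rightarrow> complex" where
  "qshift p x \<alpha> = qgamma p (x + \<alpha>) / qgamma p x"

definition qint :: "real \<Rightarrow> complex \<Rightarrow> complex" where
  "qint p z = (1 - qpow p z) / (1 - complex_of_real p)"

definition qfact :: "real \<Rightarrow> nat \<Rightarrow> complex" where
  "qfact p n = (\<Prod>k=1..n. qint p (of_nat k))"

text \<open>x is a pole of Gamma_p: some factor 1 - p^x p^k of (p^x;p)_inf vanishes.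
  For real x this means exactly that x is a non-positive integer.\<close>
definition qgamma_pole :: "real \<Rightarrow> complex \<Rightarrow> bool" where
  "qgamma_pole p x \<longleftrightarrow> (\<exists>k::nat. qpow p (x + of_nat k) = 1)"

end

theory Submission
  imports Defs
begin

(*
  Write p = q^2. Since (x|p)_s = Gamma_p(x + s) / Gamma_p(x), after the shift alpha + a, beta - b,
  gamma - c, delta - d the series is a constant multiple of Rogers' very-well-poised 6phi5 series
    L(A) = sum_n (1 - A p^(2n)) (A, B, C, D; p)_n / (p, Ap/B, Ap/C, Ap/D; p)_n (Ap/(BCD))^n
  with A = p^(alpha + a), B = p^(beta - b), ..., and the constant cancels against the right-hand
  side, so the theorem is the infinite-product evaluation of L(A).
  That evaluation comes from the contiguity relation L(A) N(A) = L(Ap) M(A), where N and M are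
  products of four linear factors in A, obtained by telescoping the difference of the two series
  against an explicit antidifference. Iterating it m times expresses L(A) through
  L(A p^m) and finite q-shifted factorials, and L(A p^m) -> 1 because, once A p^m is small, the
  terms of index n >= 1 are dominated by a geometric series uniformly in A.
*)

section \<open>Finite q-shifted factorials\<close>

definition qpoch :: "complex \<Rightarrow> real \<Rightarrow> nat \<Rightarrow> complex" where
  "qpoch a p n = (\<Prod>k<n. 1 - a * of_real (p ^ k))"

lemma qpoch_0 [simp]: "qpoch a p 0 = 1"
  by (simp add: qpoch_def)

lemma qpoch_Suc: "qpoch a p (Suc n) = qpoch a p n * (1 - a * of_real (p ^ n))"
  by (simp add: qpoch_def)

lemma qpoch_add: "qpoch a p (m + n) = qpoch a p m * qpoch (a * of_real (p ^ m)) p n"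
  by (induction n) (simp_all add: qpoch_Suc power_add mult_ac)

lemma qpoch_shift:
  "(1 - a) * qpoch (a * of_real p) p n = qpoch a p n * (1 - a * of_real p ^ n)"
  using qpoch_add[of a p 1 n] qpoch_Suc[of a p n] by (simp add: qpoch_def)

lemma qpoch_nonzero:
  assumes "\<And>k. a * of_real (p ^ k) \<noteq> 1"
  shows "qpoch a p n \<noteq> 0"
  using assms by (auto simp: qpoch_def)

lemma of_real_power_Suc_ne_1:
  assumes "0 < p" "p < 1"
  shows "of_real p * of_real (p ^ k) \<noteq> (1::complex)"
  using power_Suc_less_one[OF assms, of k]
  by (metis of_real_eq_1_iff of_real_mult order_less_irrefl power_Suc)

lemma qpoch_base_nonzero:
  "0 < p \<Longrightarrow> p < 1 \<Longrightarrow> qpoch (of_real p) p n \<noteq> 0"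
  by (intro qpoch_nonzero of_real_power_Suc_ne_1)

lemma convergent_prod_qpoch:
  fixes a :: complex
  assumes "0 < p" "p < 1"
  shows "convergent_prod (\<lambda>k. 1 - a * of_real (p ^ k))"
proof -
  have "summable (\<lambda>k. norm a * p ^ k)"
    using assms by (intro summable_mult summable_geometric) auto
  moreover have "norm (1 - a * of_real (p ^ k) - 1) = norm a * p ^ k" for k
    using assms by (simp add: norm_mult norm_power)
  ultimately show ?thesis
    by (intro abs_convergent_prod_imp_convergent_prod summable_imp_abs_convergent_prod) simp
qed

lemma qpoch_LIMSEQ:
  assumes "0 < p" "p < 1"
  shows "(\<lambda>n. qpoch a p n) \<longlonglongrightarrow> qpoch_inf a p"
proof -
  have "(\<lambda>n. \<Prod>k\<le>n. 1 - a * of_real (p ^ k)) \<longlonglongrightarrow> qpoch_inf a p"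
    unfolding qpoch_inf_def by (rule convergent_prod_LIMSEQ[OF convergent_prod_qpoch[OF assms]])
  hence "(\<lambda>n. qpoch a p (Suc n)) \<longlonglongrightarrow> qpoch_inf a p"
    by (simp add: qpoch_def lessThan_Suc_atMost)
  thus ?thesis by (rule filterlim_sequentially_Suc[THEN iffD1])
qed

lemma qpoch_inf_nonzero:
  assumes "0 < p" "p < 1" "\<And>k. a * of_real (p ^ k) \<noteq> 1"
  shows "qpoch_inf a p \<noteq> 0"
  unfolding qpoch_inf_def
  by (rule prodinf_nonzero[OF convergent_prod_qpoch[OF assms(1,2)]]) (use assms(3) in auto)

lemma qpoch_inf_split:
  assumes "0 < p" "p < 1"
  shows "qpoch_inf a p = qpoch a p n * qpoch_inf (a * of_real (p ^ n)) p"
proof -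
  have "(\<lambda>m. qpoch a p (m + n)) \<longlonglongrightarrow> qpoch_inf a p"
    by (rule LIMSEQ_ignore_initial_segment[OF qpoch_LIMSEQ[OF assms]])
  moreover have "(\<lambda>m. qpoch a p (m + n)) \<longlonglongrightarrow> qpoch a p n * qpoch_inf (a * of_real (p ^ n)) p"
    unfolding add.commute[of _ n] qpoch_add by (intro tendsto_mult tendsto_const qpoch_LIMSEQ assms)
  ultimately show ?thesis by (rule LIMSEQ_unique)
qed

lemma qpoch_bounded_below:
  assumes "0 < p" "p < 1" "\<And>k. a * of_real (p ^ k) \<noteq> 1"
  obtains c where "c > 0" "\<And>n. c \<le> norm (qpoch a p n)"
proof -
  have "(\<lambda>n. inverse (qpoch a p n)) \<longlonglongrightarrow> inverse (qpoch_inf a p)"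
    by (intro tendsto_inverse qpoch_LIMSEQ qpoch_inf_nonzero assms)
  then obtain K where K: "K > 0" "\<And>n. norm (inverse (qpoch a p n)) \<le> K"
    by (metis convergent_def convergent_imp_Bseq BseqE)
  have "1 / K \<le> norm (qpoch a p n)" for n
  proof -
    have "inverse (norm (qpoch a p n)) \<le> K" using K(2)[of n] by (simp add: norm_inverse)
    thus ?thesis using K(1) qpoch_nonzero[OF assms(3), of n] by (simp add: field_simps)
  qed
  with K(1) show ?thesis by (intro that[of "1 / K"]) auto
qed

lemma geometric_partial_sum_le:
  fixes p :: real
  assumes "0 \<le> p" "p < 1"
  shows "(\<Sum>k<n. p ^ k) \<le> 1 / (1 - p)"
  using sum_le_suminf[OF summable_geometric, of p "{..<n}"] assms by (simp add: suminf_geometric)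

lemma norm_qpoch_le:
  assumes "0 \<le> p" "p < 1"
  shows "norm (qpoch a p n) \<le> exp (norm a / (1 - p))"
proof -
  have "norm (qpoch a p n) = (\<Prod>k<n. norm (1 - a * of_real (p ^ k)))"
    by (simp add: qpoch_def prod_norm)
  also have "\<dots> \<le> (\<Prod>k<n. exp (norm a * p ^ k))"
  proof (intro prod_mono conjI)
    fix k
    have "norm (1 - a * of_real (p ^ k)) \<le> 1 + norm a * p ^ k"
      using norm_triangle_ineq4[of 1 "a * of_real (p ^ k)"] assms by (simp add: norm_mult norm_power)
    also have "\<dots> \<le> exp (norm a * p ^ k)" by (rule exp_ge_add_one_self)
    finally show "norm (1 - a * of_real (p ^ k)) \<le> exp (norm a * p ^ k)" .
  qed simp
  also have "\<dots> = exp (norm a * (\<Sum>k<n. p ^ k))"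
    by (simp add: exp_sum sum_distrib_left)
  also have "\<dots> \<le> exp (norm a / (1 - p))"
    using mult_left_mono[OF geometric_partial_sum_le[OF assms, of n], of "norm a"] by simp
  finally show ?thesis .
qed

lemma exp_neg_double_le_one_minus:
  fixes y :: real
  assumes "0 \<le> y" "y \<le> 1/2"
  shows "exp (- 2 * y) \<le> 1 - y"
proof -
  have "exp (- 2 * y) \<le> 1 / (1 + 2 * y)"
    using exp_ge_add_one_self[of "2 * y"] assms by (simp add: exp_minus field_simps)
  also have "\<dots> \<le> 1 - y"
    using assms mult_nonneg_nonneg[of y "1 - 2 * y"] by (simp add: field_simps)
  finally show ?thesis .
qed

lemma norm_qpoch_ge:
  assumes "0 \<le> p" "p < 1" "norm a \<le> 1/2"
  shows "exp (- 1 / (1 - p)) \<le> norm (qpoch a p n)"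
proof -
  have "- 1 / (1 - p) \<le> - 2 * norm a / (1 - p)"
    using assms by (intro divide_right_mono) auto
  hence "exp (- 1 / (1 - p)) \<le> exp (- 2 * (norm a * (1 / (1 - p))))"
    by simp
  also have "\<dots> \<le> exp (- 2 * (norm a * (\<Sum>k<n. p ^ k)))"
    using mult_left_mono[OF geometric_partial_sum_le[OF assms(1,2), of n], of "norm a"] by simp
  also have "\<dots> = (\<Prod>k<n. exp (- 2 * (norm a * p ^ k)))"
    by (simp add: exp_sum sum_distrib_left)
  also have "\<dots> \<le> (\<Prod>k<n. norm (1 - a * of_real (p ^ k)))"
  proof (intro prod_mono conjI)
    fix k
    have pk: "0 \<le> p ^ k" "p ^ k \<le> 1" using assms by (auto intro: power_le_one)
    have "norm a * p ^ k \<le> 1/2" using assms pk mult_mono[of "norm a" "1/2" "p ^ k" 1] by simp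
    hence "exp (- 2 * (norm a * p ^ k)) \<le> 1 - norm a * p ^ k"
      using pk by (intro exp_neg_double_le_one_minus) auto
    also have "\<dots> \<le> norm (1 - a * of_real (p ^ k))"
      using norm_triangle_ineq2[of 1 "a * of_real (p ^ k)"] assms by (simp add: norm_mult norm_power)
    finally show "exp (- 2 * (norm a * p ^ k)) \<le> norm (1 - a * of_real (p ^ k))" .
  qed simp
  also have "\<dots> = norm (qpoch a p n)" by (simp add: qpoch_def prod_norm)
  finally show ?thesis .
qed

section \<open>Complex powers and the p-gamma function\<close>

lemma qpow_add: "qpow r (x + y) = qpow r x * qpow r y"
  unfolding qpow_def by (simp add: distrib_right exp_add)

lemma qpow_diff: "qpow r (x - y) = qpow r x / qpow r y"
  unfolding qpow_def by (simp add: left_diff_distrib exp_diff)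

lemma qpow_nonzero: "qpow r x \<noteq> 0"
  unfolding qpow_def by simp

lemma qpow_of_nat: "0 < r \<Longrightarrow> qpow r (of_nat n) = of_real r ^ n"
  unfolding qpow_def by (simp add: exp_of_nat_mult exp_of_real)

lemma qpow_1: "0 < r \<Longrightarrow> qpow r 1 = of_real r"
  using qpow_of_nat[of r 1] by simp

lemma qpow_mult_of_nat: "qpow r (x * of_nat n) = qpow r x ^ n"
  unfolding qpow_def by (simp add: exp_of_nat_mult[symmetric] mult_ac)

lemma qpow_double: "0 < q \<Longrightarrow> qpow q (2 * x) = qpow (q^2) x"
  unfolding qpow_def by (simp add: ln_realpow mult_ac)

lemma norm_qpow: "norm (qpow r x) = exp (Re x * ln r)"
  unfolding qpow_def by simp

lemma not_qgamma_pole_iff: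
  "0 < p \<Longrightarrow> \<not> qgamma_pole p x \<longleftrightarrow> (\<forall>k. qpow p x * of_real (p ^ k) \<noteq> 1)"
  unfolding qgamma_pole_def by (simp add: qpow_add qpow_of_nat)

lemma not_qgamma_pole_Re_pos:
  assumes "0 < p" "p < 1" "Re x > 0"
  shows "\<not> qgamma_pole p x"
proof -
  have "norm (qpow p (x + of_nat k)) < 1" for k
    using assms by (simp add: norm_qpow mult_pos_neg add_pos_nonneg)
  thus ?thesis unfolding qgamma_pole_def by (metis norm_one order_less_irrefl)
qed

lemma qpoch_inf_qpow_nonzero:
  "0 < p \<Longrightarrow> p < 1 \<Longrightarrow> \<not> qgamma_pole p x \<Longrightarrow> qpoch_inf (qpow p x) p \<noteq> 0"
  by (rule qpoch_inf_nonzero) (auto simp: not_qgamma_pole_iff)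

lemma qpoch_inf_base_nonzero:
  "0 < p \<Longrightarrow> p < 1 \<Longrightarrow> qpoch_inf (of_real p) p \<noteq> 0"
  by (intro qpoch_inf_nonzero of_real_power_Suc_ne_1)

lemma qgamma_nonzero:
  "0 < p \<Longrightarrow> p < 1 \<Longrightarrow> \<not> qgamma_pole p x \<Longrightarrow> qgamma p x \<noteq> 0"
  unfolding qgamma_def
  by (simp add: qpoch_inf_qpow_nonzero qpoch_inf_base_nonzero qpow_nonzero)

lemma qpoch_inf_qpow_eq:
  assumes "0 < p" "p < 1" "\<not> qgamma_pole p x"
  shows "qpoch_inf (qpow p x) p = qpoch_inf (of_real p) p * qpow (1 - p) (1 - x) / qgamma p x"
  using assms qpoch_inf_qpow_nonzero[OF assms] qpoch_inf_base_nonzero[OF assms(1,2)]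
  by (simp add: qgamma_def qpow_nonzero)

lemma qgamma_add_nat:
  assumes "0 < p" "p < 1" "\<not> qgamma_pole p x"
  shows "qgamma p (x + of_nat n) = qgamma p x * qpoch (qpow p x) p n / (1 - of_real p) ^ n"
proof -
  have split: "qpoch_inf (qpow p x) p = qpoch (qpow p x) p n * qpoch_inf (qpow p (x + of_nat n)) p"
    using qpoch_inf_split[OF assms(1,2)] assms(1) by (simp add: qpow_add qpow_of_nat)
  have "qpow (1 - p) (1 - (x + of_nat n)) = qpow (1 - p) (1 - x) / (1 - of_real p) ^ n"
    using assms(2) by (simp add: qpow_diff qpow_add qpow_of_nat diff_diff_eq[symmetric])
  moreover have "qpoch_inf (qpow p x) p \<noteq> 0" "qpoch_inf (of_real p) p \<noteq> 0"
    using qpoch_inf_qpow_nonzero qpoch_inf_base_nonzero assms by auto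
  ultimately show ?thesis
    unfolding qgamma_def split by (auto simp: field_simps)
qed

lemma qfact_eq_qpoch:
  assumes "0 < p" "p < 1"
  shows "qfact p n = qpoch (of_real p) p n / (1 - of_real p) ^ n"
proof (induction n)
  case (Suc n)
  have "qfact p (Suc n) = qfact p n * ((1 - of_real p ^ Suc n) / (1 - of_real p))"
    unfolding qfact_def qint_def qpow_of_nat[OF assms(1)] by simp
  moreover have "1 - complex_of_real p \<noteq> 0" using assms by simp
  ultimately show ?case
    unfolding Suc qpoch_Suc by (simp add: field_simps)
qed (simp add: qfact_def)

section \<open>Rogers' very-well-poised 6phi5 summation\<close>

definition wp_term :: "real \<Rightarrow> complex \<Rightarrow> complex \<Rightarrow> complex \<Rightarrow> complex \<Rightarrow> nat \<Rightarrow> complex" where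
  "wp_term p a b c d n =
     qpoch a p n * qpoch b p n * qpoch c p n * qpoch d p n
     / (qpoch (of_real p) p n * qpoch (a * of_real p / b) p n
        * qpoch (a * of_real p / c) p n * qpoch (a * of_real p / d) p n)
     * (a * of_real p / (b * c * d)) ^ n"

(* This is 1 - a times the usual 6phi5 term, whose numerator carries (1 - a p^(2n)) / (1 - a);
   the normalisation avoids dividing by 1 - a. *)
definition vwp_term :: "real \<Rightarrow> complex \<Rightarrow> complex \<Rightarrow> complex \<Rightarrow> complex \<Rightarrow> nat \<Rightarrow> complex" where
  "vwp_term p a b c d n = (1 - a * of_real p ^ (2 * n)) * wp_term p a b c d n"

lemma wp_term_0 [simp]: "wp_term p a b c d 0 = 1"
  by (simp add: wp_term_def)

lemma wp_term_Suc:
  fixes p :: real and a b c d :: complex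
  defines "P \<equiv> of_real p"
  shows "wp_term p a b c d (Suc n) = wp_term p a b c d n *
     ((1 - a * P ^ n) * (1 - b * P ^ n) * (1 - c * P ^ n) * (1 - d * P ^ n) * (a * P / (b * c * d))
      / ((1 - P * P ^ n) * ((1 - a * P / b * P ^ n) * (1 - a * P / c * P ^ n) * (1 - a * P / d * P ^ n))))"
  unfolding wp_term_def qpoch_Suc P_def by (simp add: divide_inverse inverse_mult_distrib mult_ac)

lemma shift_ratio_identity:
  fixes a1 a2 b c d e f1 f2 g1 g2 h1 h2 w1 w2 A u kB kC kD yB yC yD x :: complex
  assumes "(1 - A) * a2 = a1 * u" "kB * f2 = f1 * yB" "kC * g2 = g1 * yC" "kD * h2 = h1 * yD"
    "w2 = w1 * x" "e \<noteq> 0" "f1 \<noteq> 0" "f2 \<noteq> 0" "g1 \<noteq> 0" "g2 \<noteq> 0" "h1 \<noteq> 0" "h2 \<noteq> 0"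
  shows "a2*b*c*d / (e*f2*g2*h2) * w2 * (1 - A) * (yB*yC*yD)
       = a1*b*c*d / (e*f1*g1*h1) * w1 * u * (kB*kC*kD) * x"
proof -
  have "a2*b*c*d / (e*f2*g2*h2) * w2 * (1 - A) * (yB*yC*yD)
      = ((1 - A)*a2) * b*c*d * w2 * (f1*yB) * (g1*yC) * (h1*yD) / (e*f1*g1*h1*f2*g2*h2)"
    using assms(6-) by (simp add: field_simps)
  also have "\<dots> = (a1*u) * b*c*d * (w1*x) * (kB*f2) * (kC*g2) * (kD*h2) / (e*f1*g1*h1*f2*g2*h2)"
    by (simp only: assms(1-5))
  also have "\<dots> = a1*b*c*d / (e*f1*g1*h1) * w1 * u * (kB*kC*kD) * x"
    using assms(6-) by (simp add: field_simps)
  finally show ?thesis .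
qed

lemma wp_term_shift:
  fixes p :: real and a b c d :: complex
  defines "P \<equiv> of_real p"
  assumes "0 < p" "p < 1"
    and "\<And>x k. x \<in> {b, c, d} \<Longrightarrow> a * P / x * of_real (p ^ k) \<noteq> 1"
  shows "wp_term p (a * P) b c d n * (1 - a)
           * ((1 - a * P / b * P ^ n) * (1 - a * P / c * P ^ n) * (1 - a * P / d * P ^ n))
       = wp_term p a b c d n * (1 - a * P ^ n)
           * ((1 - a * P / b) * (1 - a * P / c) * (1 - a * P / d)) * P ^ n"
proof -
  have nz: "qpoch (a * P / x) p n \<noteq> 0" "qpoch (a * P / x * P) p n \<noteq> 0" if "x \<in> {b, c, d}" for x
  proof (rule_tac [!] qpoch_nonzero)
    fix k
    show "a * P / x * of_real (p ^ k) \<noteq> 1" by (rule assms(4)[OF that])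
    show "a * P / x * P * of_real (p ^ k) \<noteq> 1"
      using assms(4)[OF that, of "Suc k"] by (simp add: P_def mult_ac)
  qed
  have shift: "(1 - a * P / x) * qpoch (a * P / x * P) p n = qpoch (a * P / x) p n * (1 - a * P / x * P ^ n)" for x
    unfolding P_def by (rule qpoch_shift)
  have eq: "a * P * P / x = a * P / x * P" for x by simp
  show ?thesis
    unfolding wp_term_def P_def[symmetric] eq
    by (rule shift_ratio_identity[OF qpoch_shift[of a p n, folded P_def] shift shift shift])
       (use nz qpoch_base_nonzero[OF assms(2,3)] in \<open>simp_all add: P_def power_mult_distrib[symmetric] mult_ac\<close>)
qed

lemma vwp_key_identity:
  fixes a b c d P x :: complex
  assumes "b \<noteq> 0" "c \<noteq> 0" "d \<noteq> 0"
  defines "z \<equiv> a * P / (b * c * d)"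
  shows "(1 - a * x^2) * (1 - z) * ((1 - a*P/b*x) * (1 - a*P/c*x) * (1 - a*P/d*x))
         - (1 - a * P * x^2) * (1 - a * x) * x * ((1 - a*P/(b*c)) * (1 - a*P/(b*d)) * (1 - a*P/(c*d)))
       = - ((1 - a*x) * (1 - b*x) * (1 - c*x) * (1 - d*x) * z) * (1 - a * z * (P * x))
         + (1 - x) * (1 - a * z * x) * ((1 - a*P/b*x) * (1 - a*P/c*x) * (1 - a*P/d*x))"
  unfolding z_def using assms(1-3) by (simp add: field_simps) algebra

definition vwp_antidiff :: "real \<Rightarrow> complex \<Rightarrow> complex \<Rightarrow> complex \<Rightarrow> complex \<Rightarrow> nat \<Rightarrow> complex" where
  "vwp_antidiff p a b c d n =
     - ((1 - a * of_real p / b) * (1 - a * of_real p / c) * (1 - a * of_real p / d))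
     * wp_term p a b c d n * (1 - of_real p ^ n) * (1 - a * (a * of_real p / (b * c * d)) * of_real p ^ n)"

lemma vwp_term_telescoping:
  fixes p :: real and a b c d :: complex
  defines "P \<equiv> of_real p"
  assumes p: "0 < p" "p < 1"
    and poles: "\<And>x k. x \<in> {b, c, d} \<Longrightarrow> a * P / x * of_real (p ^ k) \<noteq> 1"
    and nz: "b \<noteq> 0" "c \<noteq> 0" "d \<noteq> 0"
  shows "vwp_term p a b c d n * ((1 - a*P/b) * (1 - a*P/c) * (1 - a*P/d) * (1 - a*P/(b*c*d)))
       - vwp_term p (a * P) b c d n * ((1 - a) * (1 - a*P/(b*c)) * (1 - a*P/(b*d)) * (1 - a*P/(c*d)))
       = vwp_antidiff p a b c d (Suc n) - vwp_antidiff p a b c d n"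
proof -
  define x where "x = P ^ n"
  define z where "z = a * P / (b * c * d)"
  define S where "S = wp_term p a b c d n"
  define K where "K = (1 - a*P/b) * (1 - a*P/c) * (1 - a*P/d)"
  define Pi where "Pi = (1 - a*P/b*x) * (1 - a*P/c*x) * (1 - a*P/d*x)"
  define M where "M = (1 - a*P/(b*c)) * (1 - a*P/(b*d)) * (1 - a*P/(c*d))"
  have Pi_nz: "Pi \<noteq> 0"
    using poles[of b n] poles[of c n] poles[of d n] by (simp add: Pi_def x_def P_def)
  have Px_nz: "1 - P * x \<noteq> 0"
    using power_Suc_less_one[OF p, of n] by (simp add: P_def x_def flip: of_real_power of_real_mult)
  have "wp_term p (a * P) b c d n * (1 - a) * Pi = S * (1 - a * x) * K * x"
    using wp_term_shift[OF p poles[unfolded P_def], where n = n]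
    unfolding S_def K_def Pi_def x_def P_def .
  hence shift: "wp_term p (a * P) b c d n * (1 - a) = S * (1 - a * x) * K * x / Pi"
    using Pi_nz by (simp add: eq_divide_eq)
  have step: "wp_term p a b c d (Suc n)
      = S * ((1 - a*x) * (1 - b*x) * (1 - c*x) * (1 - d*x) * z / ((1 - P*x) * Pi))"
    unfolding S_def Pi_def x_def z_def P_def by (rule wp_term_Suc)
  have "vwp_term p a b c d n * (K * (1 - z)) - vwp_term p (a * P) b c d n * ((1 - a) * M)
      = (1 - a*x^2) * S * K * (1 - z) - (1 - a*P*x^2) * (wp_term p (a * P) b c d n * (1 - a)) * M"
    by (simp add: vwp_term_def S_def x_def P_def power_mult mult_ac)
  also have "\<dots> = S * K / Pi * ((1 - a*x^2) * (1 - z) * Pi - (1 - a*P*x^2) * (1 - a*x) * x * M)"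
    unfolding shift using Pi_nz by (simp add: field_simps)
  also have "\<dots> = S * K / Pi * (- ((1 - a*x) * (1 - b*x) * (1 - c*x) * (1 - d*x) * z) * (1 - a*z*(P*x))
                                + (1 - x) * (1 - a*z*x) * Pi)"
    unfolding Pi_def M_def z_def by (simp only: vwp_key_identity[OF nz])
  also have "\<dots> = - K * (S * ((1 - a*x) * (1 - b*x) * (1 - c*x) * (1 - d*x) * z / ((1 - P*x) * Pi)))
                       * (1 - P*x) * (1 - a*z*(P*x)) - (- K * S * (1 - x) * (1 - a*z*x))"
    using Pi_nz Px_nz by (simp add: field_simps)
  also have "\<dots> = vwp_antidiff p a b c d (Suc n) - vwp_antidiff p a b c d n"
    unfolding vwp_antidiff_def step[symmetric]
    by (simp only: S_def K_def z_def x_def P_def power_Suc)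
  finally show ?thesis by (simp add: K_def z_def M_def mult_ac)
qed

lemma norm_wp_term_le:
  fixes p :: real and a b c d :: complex
  assumes "0 \<le> u" "0 < w"
    and upper: "\<And>x n. x \<in> {a, b, c, d} \<Longrightarrow> norm (qpoch x p n) \<le> u"
    and lower: "\<And>x n. x \<in> {of_real p, a * of_real p / b, a * of_real p / c, a * of_real p / d}
                  \<Longrightarrow> w \<le> norm (qpoch x p n)"
  shows "norm (wp_term p a b c d n) \<le> (u / w) ^ 4 * norm (a * of_real p / (b * c * d)) ^ n"
proof -
  let ?num = "qpoch a p n * qpoch b p n * qpoch c p n * qpoch d p n"
  let ?den = "qpoch (of_real p) p n * qpoch (a * of_real p / b) p n
              * qpoch (a * of_real p / c) p n * qpoch (a * of_real p / d) p n"
  have "norm ?num \<le> u * u * u * u"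
    unfolding norm_mult using assms(1) upper by (intro mult_mono) auto
  moreover have "w * w * w * w \<le> norm ?den"
    unfolding norm_mult using assms(2) lower by (intro mult_mono) (auto intro: order_trans[OF less_imp_le[OF assms(2)]])
  ultimately have "norm ?num / norm ?den \<le> (u * u * u * u) / (w * w * w * w)"
    using assms(1,2) by (intro frac_le) auto
  hence "norm (?num / ?den) \<le> (u / w) ^ 4"
    by (simp add: norm_divide power4_eq_xxxx)
  thus ?thesis
    unfolding wp_term_def norm_mult norm_power by (rule mult_right_mono) simp
qed

lemma norm_vwp_term_le:
  assumes "0 \<le> p" "p \<le> 1" "norm (wp_term p a b c d n) \<le> B"
  shows "norm (vwp_term p a b c d n) \<le> (1 + norm a) * B"
proof -
  have "norm (1 - a * of_real p ^ (2 * n)) \<le> 1 + norm a * p ^ (2 * n)"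
    using norm_triangle_ineq4[of 1 "a * of_real p ^ (2 * n)"] assms(1)
    by (simp add: norm_mult norm_power)
  also have "\<dots> \<le> 1 + norm a"
    using assms(1,2) by (simp add: mult_left_le power_le_one)
  finally show ?thesis
    unfolding vwp_term_def norm_mult by (rule mult_mono) (use assms(3) in auto)
qed

lemma vwp_term_geometric_bound:
  fixes p :: real and a b c d :: complex
  assumes "0 < p" "p < 1"
    and poles: "\<And>x k. x \<in> {b, c, d} \<Longrightarrow> a * of_real p / x * of_real (p ^ k) \<noteq> 1"
  obtains K where "\<And>n. norm (wp_term p a b c d n) \<le> K * norm (a * of_real p / (b * c * d)) ^ n"
    "\<And>n. norm (vwp_term p a b c d n) \<le> K * norm (a * of_real p / (b * c * d)) ^ n"
proof -
  obtain w0 where w0: "w0 > 0" "\<And>n. w0 \<le> norm (qpoch (of_real p) p n)"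
    using qpoch_bounded_below[OF assms(1,2) of_real_power_Suc_ne_1[OF assms(1,2)]] by blast
  obtain w1 where w1: "w1 > 0" "\<And>n. w1 \<le> norm (qpoch (a * of_real p / b) p n)"
    using qpoch_bounded_below[OF assms(1,2) poles] by blast
  obtain w2 where w2: "w2 > 0" "\<And>n. w2 \<le> norm (qpoch (a * of_real p / c) p n)"
    using qpoch_bounded_below[OF assms(1,2) poles] by blast
  obtain w3 where w3: "w3 > 0" "\<And>n. w3 \<le> norm (qpoch (a * of_real p / d) p n)"
    using qpoch_bounded_below[OF assms(1,2) poles] by blast
  define u where "u = exp ((norm a + norm b + norm c + norm d) / (1 - p))"
  define w where "w = min (min w0 w1) (min w2 w3)"
  have "norm (qpoch x p n) \<le> u" if "x \<in> {a, b, c, d}" for x n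
  proof -
    have "norm x / (1 - p) \<le> (norm a + norm b + norm c + norm d) / (1 - p)"
      using that assms by (intro divide_right_mono) auto
    thus ?thesis
      using norm_qpoch_le[of p x n] assms unfolding u_def by (meson exp_le_cancel_iff less_imp_le order_trans)
  qed
  moreover have "w \<le> norm (qpoch x p n)"
    if "x \<in> {of_real p, a * of_real p / b, a * of_real p / c, a * of_real p / d}" for x n
  proof -
    have "w \<le> w0" "w \<le> w1" "w \<le> w2" "w \<le> w3" by (simp_all add: w_def)
    thus ?thesis
      using that by (auto intro: order_trans[OF _ w0(2)] order_trans[OF _ w1(2)]
                                 order_trans[OF _ w2(2)] order_trans[OF _ w3(2)])
  qed
  ultimately have wp: "norm (wp_term p a b c d n) \<le> (u / w) ^ 4 * norm (a * of_real p / (b * c * d)) ^ n" for n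
    using w0 w1 w2 w3 by (intro norm_wp_term_le) (auto simp: u_def w_def)
  have "0 < w" using w0 w1 w2 w3 by (simp add: w_def)
  hence X: "0 \<le> (u / w) ^ 4 * norm (a * of_real p / (b * c * d)) ^ n" for n
    by (simp add: u_def)
  show ?thesis
  proof (rule that)
    show "norm (wp_term p a b c d n) \<le> (1 + norm a) * (u / w) ^ 4 * norm (a * of_real p / (b * c * d)) ^ n" for n
      using wp[of n] mult_nonneg_nonneg[OF norm_ge_zero[of a] X[of n]]
      unfolding distrib_right mult_1_left mult.assoc by linarith
    show "norm (vwp_term p a b c d n) \<le> (1 + norm a) * (u / w) ^ 4 * norm (a * of_real p / (b * c * d)) ^ n" for n
      using norm_vwp_term_le[OF _ _ wp[of n]] assms by (simp add: mult_ac)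
  qed
qed

lemma summable_geometric_majorant:
  fixes f :: "nat \<Rightarrow> 'a::banach"
  assumes "\<And>n. norm (f n) \<le> K * r ^ n" "0 \<le> r" "r < 1"
  shows "summable f"
  by (rule summable_comparison_test[of _ "\<lambda>n. K * r ^ n"])
     (use assms in \<open>auto intro!: summable_mult summable_geometric\<close>)

lemma vwp_term_summable:
  fixes p :: real and a b c d :: complex
  assumes "0 < p" "p < 1"
    and "\<And>x k. x \<in> {b, c, d} \<Longrightarrow> a * of_real p / x * of_real (p ^ k) \<noteq> 1"
    and "norm (a * of_real p / (b * c * d)) < 1"
  shows "summable (vwp_term p a b c d)"
proof -
  obtain K where "\<And>n. norm (wp_term p a b c d n) \<le> K * norm (a * of_real p / (b * c * d)) ^ n"
    and K: "\<And>n. norm (vwp_term p a b c d n) \<le> K * norm (a * of_real p / (b * c * d)) ^ n"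
    using vwp_term_geometric_bound[OF assms(1-3)] by metis
  show ?thesis by (rule summable_geometric_majorant[OF K]) (use assms(4) in auto)
qed

lemma vwp_antidiff_LIMSEQ_0:
  fixes p :: real and a b c d :: complex
  assumes "0 < p" "p < 1"
    and "\<And>x k. x \<in> {b, c, d} \<Longrightarrow> a * of_real p / x * of_real (p ^ k) \<noteq> 1"
    and "norm (a * of_real p / (b * c * d)) < 1"
  shows "vwp_antidiff p a b c d \<longlonglongrightarrow> 0"
proof -
  obtain K where K: "\<And>n. norm (wp_term p a b c d n) \<le> K * norm (a * of_real p / (b * c * d)) ^ n"
    and "\<And>n. norm (vwp_term p a b c d n) \<le> K * norm (a * of_real p / (b * c * d)) ^ n"
    using vwp_term_geometric_bound[OF assms(1-3)] by metis
  have "(\<lambda>n. K * norm (a * of_real p / (b * c * d)) ^ n) \<longlonglongrightarrow> 0"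
    using assms(4) by (intro tendsto_mult_right_zero LIMSEQ_power_zero) auto
  hence "wp_term p a b c d \<longlonglongrightarrow> 0"
    by (rule Lim_null_comparison[rotated]) (use K in auto)
  moreover have "(\<lambda>n. of_real p ^ n :: complex) \<longlonglongrightarrow> 0"
    using assms(1,2) by (intro LIMSEQ_power_zero) auto
  ultimately have "vwp_antidiff p a b c d \<longlonglongrightarrow>
      - ((1 - a * of_real p / b) * (1 - a * of_real p / c) * (1 - a * of_real p / d))
      * 0 * (1 - 0) * (1 - a * (a * of_real p / (b * c * d)) * 0)"
    unfolding vwp_antidiff_def by (intro tendsto_mult tendsto_diff tendsto_const)
  thus ?thesis by simp
qed

lemma vwp_suminf_contiguity:
  fixes p :: real and a b c d :: complex
  defines "P \<equiv> of_real p"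
  assumes p: "0 < p" "p < 1"
    and poles: "\<And>x k. x \<in> {b, c, d} \<Longrightarrow> a * P / x * of_real (p ^ k) \<noteq> 1"
    and nz: "b \<noteq> 0" "c \<noteq> 0" "d \<noteq> 0"
    and z: "norm (a * P / (b * c * d)) < 1"
  shows "suminf (vwp_term p a b c d) * ((1 - a*P/b) * (1 - a*P/c) * (1 - a*P/d) * (1 - a*P/(b*c*d)))
       = suminf (vwp_term p (a * P) b c d) * ((1 - a) * (1 - a*P/(b*c)) * (1 - a*P/(b*d)) * (1 - a*P/(c*d)))"
proof -
  have poles': "a * P * P / x * of_real (p ^ k) \<noteq> 1" if "x \<in> {b, c, d}" for x k
    using poles[OF that, of "Suc k"] by (simp add: P_def mult_ac)
  have "norm (a * P * P / (b * c * d)) = norm (a * P / (b * c * d)) * p"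
    using p by (simp add: P_def norm_mult norm_divide)
  also have "\<dots> \<le> norm (a * P / (b * c * d))"
    using p by (intro mult_left_le) auto
  finally have z': "norm (a * P * P / (b * c * d)) < 1" using z by simp
  have tele: "vwp_term p a b c d n * ((1 - a*P/b) * (1 - a*P/c) * (1 - a*P/d) * (1 - a*P/(b*c*d)))
       - vwp_term p (a * P) b c d n * ((1 - a) * (1 - a*P/(b*c)) * (1 - a*P/(b*d)) * (1 - a*P/(c*d)))
       = vwp_antidiff p a b c d (Suc n) - vwp_antidiff p a b c d n" for n
    unfolding P_def by (rule vwp_term_telescoping[OF p poles[unfolded P_def] nz])
  have "(\<lambda>n. vwp_antidiff p a b c d (Suc n) - vwp_antidiff p a b c d n) sums (0 - vwp_antidiff p a b c d 0)"
    by (intro telescope_sums vwp_antidiff_LIMSEQ_0 p poles[unfolded P_def] z[unfolded P_def])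
  hence "(\<lambda>n. vwp_term p a b c d n * ((1 - a*P/b) * (1 - a*P/c) * (1 - a*P/d) * (1 - a*P/(b*c*d)))
       - vwp_term p (a * P) b c d n * ((1 - a) * (1 - a*P/(b*c)) * (1 - a*P/(b*d)) * (1 - a*P/(c*d)))) sums 0"
    unfolding tele by (simp add: vwp_antidiff_def)
  moreover have "(\<lambda>n. vwp_term p a b c d n * ((1 - a*P/b) * (1 - a*P/c) * (1 - a*P/d) * (1 - a*P/(b*c*d)))
       - vwp_term p (a * P) b c d n * ((1 - a) * (1 - a*P/(b*c)) * (1 - a*P/(b*d)) * (1 - a*P/(c*d))))
     sums (suminf (vwp_term p a b c d) * ((1 - a*P/b) * (1 - a*P/c) * (1 - a*P/d) * (1 - a*P/(b*c*d)))
       - suminf (vwp_term p (a * P) b c d) * ((1 - a) * (1 - a*P/(b*c)) * (1 - a*P/(b*d)) * (1 - a*P/(c*d))))"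
    using vwp_term_summable[OF p poles[unfolded P_def] z[unfolded P_def]]
          vwp_term_summable[OF p poles'[unfolded P_def] z'[unfolded P_def]]
    by (intro sums_diff sums_mult2 summable_sums) (simp_all add: P_def)
  ultimately show ?thesis
    using sums_unique2 by fastforce
qed

lemma norm_suminf_minus_head_le:
  fixes f :: "nat \<Rightarrow> 'a::banach"
  assumes bound: "\<And>n. norm (f n) \<le> K * r ^ n" and r: "0 \<le> r" "r \<le> 1/2"
  shows "norm (suminf f - f 0) \<le> 2 * K * r"
proof -
  have "norm (f 0) \<le> K" using bound[of 0] by simp
  hence K: "0 \<le> K" by (metis norm_ge_zero order_trans)
  have geom: "(\<lambda>n. K * r ^ Suc n) sums (K * r / (1 - r))"
    using sums_mult[OF geometric_sums[of r], of "K * r"] r by (simp add: mult_ac)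
  have "suminf f - f 0 = (\<Sum>n. f (Suc n))"
    using suminf_split_head[OF summable_geometric_majorant[OF bound r(1)]] r by simp
  also have "norm \<dots> \<le> K * r / (1 - r)"
    using norm_suminf_le[OF bound[of "Suc _"] sums_summable[OF geom]] sums_unique[OF geom] by simp
  also have "\<dots> \<le> 2 * K * r"
    using r K mult_nonneg_nonneg[of "K * r" "1 - 2 * r"] by (simp add: field_simps)
  finally show ?thesis .
qed

lemma vwp_suminf_near_one:
  fixes p :: real and b c d :: complex
  assumes p: "0 < p" "p < 1"
  shows "\<exists>K. \<forall>a. norm a \<le> 1/2 \<and> (\<forall>x \<in> {b, c, d}. norm (a * of_real p / x) \<le> 1/2)
      \<and> norm (a * of_real p / (b * c * d)) \<le> 1/2
      \<longrightarrow> norm (suminf (vwp_term p a b c d) - 1) \<le> norm a + K * norm (a * of_real p / (b * c * d))"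
proof -
  obtain w0 where w0: "w0 > 0" "\<And>n. w0 \<le> norm (qpoch (of_real p) p n)"
    using qpoch_bounded_below[OF p of_real_power_Suc_ne_1[OF p]] by blast
  define u where "u = exp ((1 + norm b + norm c + norm d) / (1 - p))"
  define w where "w = min w0 (exp (- 1 / (1 - p)))"
  define K where "K = (u / w) ^ 4"
  have "w > 0" using w0 by (simp add: w_def)
  have "norm (suminf (vwp_term p a b c d) - 1) \<le> norm a + 4 * K * norm (a * of_real p / (b * c * d))"
    if a: "norm a \<le> 1/2" and ax: "\<forall>x \<in> {b, c, d}. norm (a * of_real p / x) \<le> 1/2"
      and r: "norm (a * of_real p / (b * c * d)) \<le> 1/2" for a
  proof -
    have upper: "norm (qpoch x p n) \<le> u" if "x \<in> {a, b, c, d}" for x n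
    proof -
      have "norm x \<le> 1 + norm b + norm c + norm d"
        using that a norm_ge_zero[of b] norm_ge_zero[of c] norm_ge_zero[of d]
        by (elim insertE) (auto simp del: norm_ge_zero)
      hence "norm x / (1 - p) \<le> (1 + norm b + norm c + norm d) / (1 - p)"
        using p by (intro divide_right_mono) auto
      thus ?thesis
        using norm_qpoch_le[of p x n] p unfolding u_def by (meson exp_le_cancel_iff less_imp_le order_trans)
    qed
    have lower: "w \<le> norm (qpoch x p n)"
      if "x \<in> {of_real p, a * of_real p / b, a * of_real p / c, a * of_real p / d}" for x n
      using that w0(2)[of n] norm_qpoch_ge[of p x n] ax p unfolding w_def by auto
    have "norm (vwp_term p a b c d n) \<le> (2 * K) * norm (a * of_real p / (b * c * d)) ^ n" for n
    proof -
      have "norm (vwp_term p a b c d n) \<le> (1 + norm a) * (K * norm (a * of_real p / (b * c * d)) ^ n)"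
        using norm_wp_term_le[OF _ \<open>w > 0\<close> upper lower] p
        by (intro norm_vwp_term_le) (auto simp: K_def u_def)
      also have "\<dots> \<le> 2 * (K * norm (a * of_real p / (b * c * d)) ^ n)"
        using a \<open>w > 0\<close> by (intro mult_right_mono) (auto simp: K_def u_def)
      finally show ?thesis by simp
    qed
    from norm_suminf_minus_head_le[OF this _ r]
    have "norm (suminf (vwp_term p a b c d) - vwp_term p a b c d 0)
        \<le> 4 * K * norm (a * of_real p / (b * c * d))"
      by simp
    moreover have "vwp_term p a b c d 0 = 1 - a" by (simp add: vwp_term_def)
    ultimately have "norm (suminf (vwp_term p a b c d) - (1 - a)) \<le> 4 * K * norm (a * of_real p / (b * c * d))"
      by simp
    thus ?thesis
      using norm_triangle_ineq[of "suminf (vwp_term p a b c d) - (1 - a)" "- a"] by simp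
  qed
  thus ?thesis by (intro exI[of _ "4 * K"]) auto
qed

lemma vwp_suminf_iterate:
  fixes p :: real and a b c d :: complex
  defines "P \<equiv> of_real p"
  assumes p: "0 < p" "p < 1"
    and poles: "\<And>x k. x \<in> {b, c, d} \<Longrightarrow> a * P / x * of_real (p ^ k) \<noteq> 1"
    and nz: "b \<noteq> 0" "c \<noteq> 0" "d \<noteq> 0"
    and z: "norm (a * P / (b * c * d)) < 1"
  shows "suminf (vwp_term p a b c d)
           * (qpoch (a*P/b) p m * qpoch (a*P/c) p m * qpoch (a*P/d) p m * qpoch (a*P/(b*c*d)) p m)
       = suminf (vwp_term p (a * P ^ m) b c d)
           * (qpoch a p m * qpoch (a*P/(b*c)) p m * qpoch (a*P/(b*d)) p m * qpoch (a*P/(c*d)) p m)"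
proof (induction m)
  case (Suc m)
  have poles_m: "a * P ^ m * P / x * of_real (p ^ k) \<noteq> 1" if "x \<in> {b, c, d}" for x k
    using poles[OF that, of "m + k"] by (simp add: P_def power_add mult_ac)
  have "norm (a * P ^ m * P / (b * c * d)) = norm (a * P / (b * c * d)) * p ^ m"
    using p by (simp add: P_def norm_mult norm_divide norm_power)
  also have "\<dots> \<le> norm (a * P / (b * c * d))"
    using p by (intro mult_left_le) (auto simp: power_le_one)
  finally have z_m: "norm (a * P ^ m * P / (b * c * d)) < 1" using z by simp
  define L where "L = (\<lambda>x. suminf (vwp_term p x b c d))"
  define N where "N = (1 - a*P/b * P^m) * (1 - a*P/c * P^m) * (1 - a*P/d * P^m) * (1 - a*P/(b*c*d) * P^m)"
  define M where "M = (1 - a * P^m) * (1 - a*P/(b*c) * P^m) * (1 - a*P/(b*d) * P^m) * (1 - a*P/(c*d) * P^m)"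
  have contiguity: "L (a * P ^ m) * N = L (a * P ^ Suc m) * M"
    using vwp_suminf_contiguity[OF p poles_m[unfolded P_def] nz z_m[unfolded P_def]]
    unfolding L_def N_def M_def P_def by (simp add: mult_ac)
  have qpoch_Suc': "qpoch x p (Suc m) = qpoch x p m * (1 - x * P ^ m)" for x
    by (simp add: qpoch_Suc P_def)
  have "L a * (qpoch (a*P/b) p (Suc m) * qpoch (a*P/c) p (Suc m) * qpoch (a*P/d) p (Suc m)
          * qpoch (a*P/(b*c*d)) p (Suc m))
      = (L a * (qpoch (a*P/b) p m * qpoch (a*P/c) p m * qpoch (a*P/d) p m * qpoch (a*P/(b*c*d)) p m)) * N"
    unfolding qpoch_Suc' N_def by (simp only: mult_ac)
  also have "\<dots> = (L (a * P ^ m) * N)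
      * (qpoch a p m * qpoch (a*P/(b*c)) p m * qpoch (a*P/(b*d)) p m * qpoch (a*P/(c*d)) p m)"
    unfolding L_def Suc.IH by (simp only: mult_ac)
  also have "\<dots> = L (a * P ^ Suc m) * (qpoch a p (Suc m) * qpoch (a*P/(b*c)) p (Suc m)
          * qpoch (a*P/(b*d)) p (Suc m) * qpoch (a*P/(c*d)) p (Suc m))"
    unfolding contiguity qpoch_Suc' M_def by (simp only: mult_ac)
  finally show ?case unfolding L_def .
qed simp

lemma vwp_suminf_shift_LIMSEQ:
  fixes p :: real and a b c d :: complex
  assumes p: "0 < p" "p < 1"
  shows "(\<lambda>m. suminf (vwp_term p (a * of_real p ^ m) b c d)) \<longlonglongrightarrow> 1"
proof -
  from vwp_suminf_near_one[OF p] obtain K where K: "\<forall>a. norm a \<le> 1/2 \<and> (\<forall>x \<in> {b, c, d}. norm (a * of_real p / x) \<le> 1/2)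
      \<and> norm (a * of_real p / (b * c * d)) \<le> 1/2
      \<longrightarrow> norm (suminf (vwp_term p a b c d) - 1) \<le> norm a + K * norm (a * of_real p / (b * c * d))"
    ..
  have small: "(\<lambda>m. norm (y * of_real p ^ m)) \<longlonglongrightarrow> 0" for y :: complex
  proof -
    have "(\<lambda>m. norm y * p ^ m) \<longlonglongrightarrow> 0"
      using p by (intro tendsto_mult_right_zero LIMSEQ_power_zero) auto
    thus ?thesis using p by (simp add: norm_mult norm_power)
  qed
  have ev: "eventually (\<lambda>m. norm (y * of_real p ^ m) \<le> 1/2) sequentially" for y :: complex
    using order_tendstoD(2)[OF small[of y], of "1/2"] by (auto elim: eventually_mono)
  have shift: "a * of_real p ^ m * of_real p / x = a * of_real p / x * of_real p ^ m" for x m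
    by simp
  have "eventually (\<lambda>m. norm (a * of_real p ^ m) \<le> 1/2
      \<and> (\<forall>x \<in> {b, c, d}. norm (a * of_real p ^ m * of_real p / x) \<le> 1/2)
      \<and> norm (a * of_real p ^ m * of_real p / (b * c * d)) \<le> 1/2) sequentially"
    using ev[of a] ev[of "a * of_real p / b"] ev[of "a * of_real p / c"] ev[of "a * of_real p / d"]
          ev[of "a * of_real p / (b * c * d)"]
    unfolding shift by (simp add: eventually_conj_iff)
  moreover have "norm (suminf (vwp_term p (a * of_real p ^ m) b c d) - 1)
      \<le> norm (a * of_real p ^ m) + K * norm (a * of_real p / (b * c * d) * of_real p ^ m)"
    if "norm (a * of_real p ^ m) \<le> 1/2
      \<and> (\<forall>x \<in> {b, c, d}. norm (a * of_real p ^ m * of_real p / x) \<le> 1/2)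
      \<and> norm (a * of_real p ^ m * of_real p / (b * c * d)) \<le> 1/2" for m
    using mp[OF spec[OF K, of "a * of_real p ^ m"] that] by (simp only: shift)
  ultimately have "eventually (\<lambda>m. norm (suminf (vwp_term p (a * of_real p ^ m) b c d) - 1)
      \<le> norm (a * of_real p ^ m) + K * norm (a * of_real p / (b * c * d) * of_real p ^ m)) sequentially"
    by (rule eventually_mono)
  moreover have "(\<lambda>m. norm (a * of_real p ^ m) + K * norm (a * of_real p / (b * c * d) * of_real p ^ m))
      \<longlonglongrightarrow> 0"
    by (intro tendsto_add_zero tendsto_mult_right_zero small)
  ultimately have "(\<lambda>m. suminf (vwp_term p (a * of_real p ^ m) b c d) - 1) \<longlonglongrightarrow> 0"
    by (rule Lim_null_comparison)
  thus ?thesis by (simp add: LIM_zero_iff)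
qed

lemma vwp_sums:
  fixes p :: real and a b c d :: complex
  defines "P \<equiv> of_real p"
  assumes p: "0 < p" "p < 1"
    and poles: "\<And>x k. x \<in> {b, c, d} \<Longrightarrow> a * P / x * of_real (p ^ k) \<noteq> 1"
    and nz: "b \<noteq> 0" "c \<noteq> 0" "d \<noteq> 0"
    and z: "norm (a * P / (b * c * d)) < 1"
  shows "vwp_term p a b c d sums
     (qpoch_inf a p * qpoch_inf (a*P/(b*c)) p * qpoch_inf (a*P/(b*d)) p * qpoch_inf (a*P/(c*d)) p
      / (qpoch_inf (a*P/b) p * qpoch_inf (a*P/c) p * qpoch_inf (a*P/d) p * qpoch_inf (a*P/(b*c*d)) p))"
proof -
  define Num where "Num = qpoch_inf a p * qpoch_inf (a*P/(b*c)) p * qpoch_inf (a*P/(b*d)) p * qpoch_inf (a*P/(c*d)) p"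
  define Den where "Den = qpoch_inf (a*P/b) p * qpoch_inf (a*P/c) p * qpoch_inf (a*P/d) p * qpoch_inf (a*P/(b*c*d)) p"
  have iterate: "suminf (vwp_term p a b c d)
           * (qpoch (a*P/b) p m * qpoch (a*P/c) p m * qpoch (a*P/d) p m * qpoch (a*P/(b*c*d)) p m)
      = suminf (vwp_term p (a * P ^ m) b c d)
           * (qpoch a p m * qpoch (a*P/(b*c)) p m * qpoch (a*P/(b*d)) p m * qpoch (a*P/(c*d)) p m)" for m
    unfolding P_def by (rule vwp_suminf_iterate[OF p poles[unfolded P_def] nz z[unfolded P_def]])
  have "(\<lambda>m. suminf (vwp_term p a b c d)
           * (qpoch (a*P/b) p m * qpoch (a*P/c) p m * qpoch (a*P/d) p m * qpoch (a*P/(b*c*d)) p m))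
        \<longlonglongrightarrow> suminf (vwp_term p a b c d) * Den"
    unfolding Den_def by (intro tendsto_mult tendsto_const qpoch_LIMSEQ p)
  moreover have "(\<lambda>m. suminf (vwp_term p a b c d)
           * (qpoch (a*P/b) p m * qpoch (a*P/c) p m * qpoch (a*P/d) p m * qpoch (a*P/(b*c*d)) p m))
        \<longlonglongrightarrow> 1 * Num"
    unfolding iterate unfolding Num_def P_def by (intro tendsto_mult qpoch_LIMSEQ vwp_suminf_shift_LIMSEQ p)
  ultimately have "suminf (vwp_term p a b c d) * Den = 1 * Num"
    by (rule LIMSEQ_unique)
  moreover have "Den \<noteq> 0"
  proof -
    have "norm (a*P/(b*c*d) * of_real (p ^ k)) = norm (a*P/(b*c*d)) * p ^ k" for k
      using p by (simp only: norm_mult norm_of_real abs_of_pos zero_less_power)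
    hence "norm (a*P/(b*c*d) * of_real (p ^ k)) \<le> norm (a*P/(b*c*d))" for k
      using p by (simp add: mult_left_le power_le_one)
    hence "a*P/(b*c*d) * of_real (p ^ k) \<noteq> 1" for k
      using z by (metis norm_one not_le)
    thus ?thesis
      unfolding Den_def using qpoch_inf_nonzero[OF p poles] qpoch_inf_nonzero[OF p] by auto
  qed
  ultimately have "suminf (vwp_term p a b c d) = Num / Den"
    by (simp add: eq_divide_eq)
  moreover have "summable (vwp_term p a b c d)"
    by (rule vwp_term_summable[OF p poles[unfolded P_def] z[unfolded P_def]])
  ultimately show ?thesis
    unfolding Num_def Den_def by (metis summable_sums)
qed

section \<open>The summation in p-gamma form\<close>

lemma qpow_one_add_diff:
  assumes "0 < p"
  shows "qpow p (1 + \<alpha> - x) = qpow p \<alpha> * of_real p / qpow p x"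
    and "qpow p (1 + \<alpha> - x - y) = qpow p \<alpha> * of_real p / (qpow p x * qpow p y)"
    and "qpow p (1 + \<alpha> - x - y - z) = qpow p \<alpha> * of_real p / (qpow p x * qpow p y * qpow p z)"
  using assms by (simp_all add: qpow_add qpow_diff qpow_1 mult.commute)

(* The summand of the main series for a = b = c = d = 0. *)
definition vwp_qgamma_term :: "real \<Rightarrow> complex \<Rightarrow> complex \<Rightarrow> complex \<Rightarrow> complex \<Rightarrow> nat \<Rightarrow> complex" where
  "vwp_qgamma_term p \<alpha> \<beta> \<gamma> \<delta> n =
     (1 - qpow p (\<alpha> + 2 * of_nat n))
       * qgamma p (\<alpha> + of_nat n) * qgamma p (\<beta> + of_nat n)
       * qgamma p (\<gamma> + of_nat n) * qgamma p (\<delta> + of_nat n)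
     / ((1 - of_real p) * qfact p n * qgamma p (1 + \<alpha> - \<beta> + of_nat n)
        * qgamma p (1 + \<alpha> - \<gamma> + of_nat n) * qgamma p (1 + \<alpha> - \<delta> + of_nat n))
     * qpow p ((1 + \<alpha> - \<beta> - \<gamma> - \<delta>) * of_nat n)"

lemma vwp_qgamma_term_eq:
  fixes p :: real and \<alpha> \<beta> \<gamma> \<delta> :: complex
  assumes p: "0 < p" "p < 1"
    and poles: "\<forall>x \<in> {\<alpha>, \<beta>, \<gamma>, \<delta>, 1 + \<alpha> - \<beta>, 1 + \<alpha> - \<gamma>, 1 + \<alpha> - \<delta>}. \<not> qgamma_pole p x"
  shows "vwp_qgamma_term p \<alpha> \<beta> \<gamma> \<delta> n
     = qgamma p \<alpha> * qgamma p \<beta> * qgamma p \<gamma> * qgamma p \<delta>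
        / ((1 - of_real p) * qgamma p (1 + \<alpha> - \<beta>) * qgamma p (1 + \<alpha> - \<gamma>) * qgamma p (1 + \<alpha> - \<delta>))
       * vwp_term p (qpow p \<alpha>) (qpow p \<beta>) (qpow p \<gamma>) (qpow p \<delta>) n"
proof -
  define P where "P = (of_real p :: complex)"
  define A where "A = qpow p \<alpha>"
  define B where "B = qpow p \<beta>"
  define C where "C = qpow p \<gamma>"
  define D where "D = qpow p \<delta>"
  define U where "U = (1 - P) ^ n"
  have P_ne_1: "1 - P \<noteq> 0" using p by (simp add: P_def)
  hence U: "U \<noteq> 0" by (simp add: U_def)
  have gamma_shift: "qgamma p (x + of_nat n) = qgamma p x * qpoch (qpow p x) p n / U"
    if "\<not> qgamma_pole p x" for x
    unfolding U_def P_def by (rule qgamma_add_nat[OF p that])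
  have np: "\<not> qgamma_pole p \<alpha>" "\<not> qgamma_pole p \<beta>" "\<not> qgamma_pole p \<gamma>" "\<not> qgamma_pole p \<delta>"
    "\<not> qgamma_pole p (1 + \<alpha> - \<beta>)" "\<not> qgamma_pole p (1 + \<alpha> - \<gamma>)" "\<not> qgamma_pole p (1 + \<alpha> - \<delta>)"
    using poles by simp_all
  have pow: "qpow p (1 + \<alpha> - x) = A * P / qpow p x" for x
    unfolding A_def P_def by (rule qpow_one_add_diff(1)[OF p(1)])
  have e1: "qpow p (\<alpha> + 2 * of_nat n) = A * P ^ (2 * n)"
    using qpow_of_nat[OF p(1), of "2 * n"] by (simp add: qpow_add A_def P_def)
  have e2: "qpow p ((1 + \<alpha> - \<beta> - \<gamma> - \<delta>) * of_nat n) = (A * P / (B * C * D)) ^ n"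
    using qpow_one_add_diff(3)[OF p(1)] by (simp add: qpow_mult_of_nat A_def B_def C_def D_def P_def)
  have e3: "qfact p n = qpoch P p n / U"
    unfolding U_def P_def by (rule qfact_eq_qpoch[OF p])
  have "qpoch (A * P / x) p n \<noteq> 0" if "x \<in> {B, C, D}" for x
    using that np(5-7) p by (auto intro!: qpoch_nonzero simp: not_qgamma_pole_iff pow B_def C_def D_def)
  moreover have "qpoch P p n \<noteq> 0" "qgamma p (1 + \<alpha> - \<beta>) \<noteq> 0"
    "qgamma p (1 + \<alpha> - \<gamma>) \<noteq> 0" "qgamma p (1 + \<alpha> - \<delta>) \<noteq> 0" "B \<noteq> 0" "C \<noteq> 0" "D \<noteq> 0"
    using qpoch_base_nonzero[OF p] qgamma_nonzero[OF p] np
    by (simp_all add: P_def B_def C_def D_def qpow_nonzero)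
  ultimately show ?thesis
    unfolding vwp_qgamma_term_def vwp_term_def wp_term_def e1 e2 e3
      gamma_shift[OF np(1)] gamma_shift[OF np(2)] gamma_shift[OF np(3)] gamma_shift[OF np(4)]
      gamma_shift[OF np(5)] gamma_shift[OF np(6)] gamma_shift[OF np(7)]
      A_def[symmetric] B_def[symmetric] C_def[symmetric] D_def[symmetric] P_def[symmetric]
    using U P_ne_1 by (simp add: field_simps pow B_def[symmetric] C_def[symmetric] D_def[symmetric])
qed

lemma vwp_product_qgamma_eq:
  fixes p :: real and \<alpha> \<beta> \<gamma> \<delta> :: complex
  defines "A \<equiv> qpow p \<alpha>" and "B \<equiv> qpow p \<beta>" and "C \<equiv> qpow p \<gamma>" and "D \<equiv> qpow p \<delta>"
    and "P \<equiv> of_real p"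
  assumes p: "0 < p" "p < 1"
    and poles: "\<forall>x \<in> {\<alpha>, \<beta>, \<gamma>, \<delta>, 1 + \<alpha> - \<beta>, 1 + \<alpha> - \<gamma>, 1 + \<alpha> - \<delta>, 1 + \<alpha> - \<beta> - \<gamma>,
                       1 + \<alpha> - \<beta> - \<delta>, 1 + \<alpha> - \<gamma> - \<delta>, 1 + \<alpha> - \<beta> - \<gamma> - \<delta>}. \<not> qgamma_pole p x"
  shows "qgamma p \<alpha> * qgamma p \<beta> * qgamma p \<gamma> * qgamma p \<delta>
          / ((1 - P) * qgamma p (1 + \<alpha> - \<beta>) * qgamma p (1 + \<alpha> - \<gamma>) * qgamma p (1 + \<alpha> - \<delta>))
        * (qpoch_inf A p * qpoch_inf (A * P / (B * C)) p * qpoch_inf (A * P / (B * D)) p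
           * qpoch_inf (A * P / (C * D)) p
           / (qpoch_inf (A * P / B) p * qpoch_inf (A * P / C) p * qpoch_inf (A * P / D) p
              * qpoch_inf (A * P / (B * C * D)) p))
     = qgamma p \<beta> * qgamma p \<gamma> * qgamma p \<delta> * qgamma p (1 + \<alpha> - \<beta> - \<gamma> - \<delta>)
          / (qgamma p (1 + \<alpha> - \<beta> - \<gamma>) * qgamma p (1 + \<alpha> - \<beta> - \<delta>) * qgamma p (1 + \<alpha> - \<gamma> - \<delta>))"
proof -
  define G where "G = qpoch_inf P p"
  define W where "W = qpow (1 - p)"
  have inf_eq: "qpoch_inf (qpow p x) p = G * W (1 - x) / qgamma p x" if "\<not> qgamma_pole p x" for x
    unfolding G_def W_def P_def by (rule qpoch_inf_qpow_eq[OF p that])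
  have W_eq: "W (1 - \<alpha>) = (1 - P) * W (1 - (1 + \<alpha> - \<beta>)) * W (1 - (1 + \<alpha> - \<gamma>)) * W (1 - (1 + \<alpha> - \<delta>))
      * W (1 - (1 + \<alpha> - \<beta> - \<gamma> - \<delta>))
      / (W (1 - (1 + \<alpha> - \<beta> - \<gamma>)) * W (1 - (1 + \<alpha> - \<beta> - \<delta>)) * W (1 - (1 + \<alpha> - \<gamma> - \<delta>)))"
  proof -
    have "1 - P = W 1" using p by (simp add: W_def P_def qpow_1)
    thus ?thesis
      unfolding W_def by (simp only: qpow_add[symmetric] qpow_diff[symmetric]) (simp add: algebra_simps)
  qed
  have ratios: "A * P / B = qpow p (1 + \<alpha> - \<beta>)" "A * P / C = qpow p (1 + \<alpha> - \<gamma>)"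
    "A * P / D = qpow p (1 + \<alpha> - \<delta>)" "A * P / (B * C) = qpow p (1 + \<alpha> - \<beta> - \<gamma>)"
    "A * P / (B * D) = qpow p (1 + \<alpha> - \<beta> - \<delta>)" "A * P / (C * D) = qpow p (1 + \<alpha> - \<gamma> - \<delta>)"
    "A * P / (B * C * D) = qpow p (1 + \<alpha> - \<beta> - \<gamma> - \<delta>)"
    by (simp_all add: qpow_one_add_diff[OF p(1)] A_def B_def C_def D_def P_def)
  have "G \<noteq> 0" unfolding G_def P_def by (rule qpoch_inf_base_nonzero[OF p])
  moreover have "W x \<noteq> 0" for x by (simp add: W_def qpow_nonzero)
  moreover have "1 - P \<noteq> 0" using p by (simp add: P_def)
  moreover have "qgamma p x \<noteq> 0" if "\<not> qgamma_pole p x" for x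
    by (rule qgamma_nonzero[OF p that])
  ultimately show ?thesis
    unfolding ratios unfolding A_def using poles by (simp add: inf_eq W_eq field_simps)
qed

lemma vwp_qgamma_sums:
  fixes p :: real and \<alpha> \<beta> \<gamma> \<delta> :: complex
  assumes p: "0 < p" "p < 1"
    and Re: "Re (1 + \<alpha> - \<beta> - \<gamma> - \<delta>) > 0"
    and poles: "\<forall>x \<in> {\<alpha>, \<beta>, \<gamma>, \<delta>, 1 + \<alpha> - \<beta>, 1 + \<alpha> - \<gamma>, 1 + \<alpha> - \<delta>,
                        1 + \<alpha> - \<beta> - \<gamma>, 1 + \<alpha> - \<beta> - \<delta>, 1 + \<alpha> - \<gamma> - \<delta>}. \<not> qgamma_pole p x"
  shows "vwp_qgamma_term p \<alpha> \<beta> \<gamma> \<delta>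
    sums (qgamma p \<beta> * qgamma p \<gamma> * qgamma p \<delta> * qgamma p (1 + \<alpha> - \<beta> - \<gamma> - \<delta>)
          / (qgamma p (1 + \<alpha> - \<beta> - \<gamma>) * qgamma p (1 + \<alpha> - \<beta> - \<delta>) * qgamma p (1 + \<alpha> - \<gamma> - \<delta>)))"
proof -
  have poles': "\<forall>x \<in> {\<alpha>, \<beta>, \<gamma>, \<delta>, 1 + \<alpha> - \<beta>, 1 + \<alpha> - \<gamma>, 1 + \<alpha> - \<delta>, 1 + \<alpha> - \<beta> - \<gamma>,
                      1 + \<alpha> - \<beta> - \<delta>, 1 + \<alpha> - \<gamma> - \<delta>, 1 + \<alpha> - \<beta> - \<gamma> - \<delta>}. \<not> qgamma_pole p x"
    using poles not_qgamma_pole_Re_pos[OF p Re] by simp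
  have vwp_poles: "qpow p \<alpha> * of_real p / x * of_real (p ^ k) \<noteq> 1"
    if "x \<in> {qpow p \<beta>, qpow p \<gamma>, qpow p \<delta>}" for x k
    using that poles p by (auto simp: not_qgamma_pole_iff qpow_one_add_diff)
  have z: "norm (qpow p \<alpha> * of_real p / (qpow p \<beta> * qpow p \<gamma> * qpow p \<delta>)) < 1"
    using Re p by (simp flip: qpow_one_add_diff(3) add: norm_qpow mult_pos_neg)
  have summand: "vwp_qgamma_term p \<alpha> \<beta> \<gamma> \<delta>
     = (\<lambda>n. qgamma p \<alpha> * qgamma p \<beta> * qgamma p \<gamma> * qgamma p \<delta>
        / ((1 - of_real p) * qgamma p (1 + \<alpha> - \<beta>) * qgamma p (1 + \<alpha> - \<gamma>) * qgamma p (1 + \<alpha> - \<delta>))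
       * vwp_term p (qpow p \<alpha>) (qpow p \<beta>) (qpow p \<gamma>) (qpow p \<delta>) n)"
    using poles by (intro ext vwp_qgamma_term_eq[OF p]) simp
  show ?thesis
    unfolding summand vwp_product_qgamma_eq[OF p poles', symmetric]
    by (rule sums_mult[OF vwp_sums[OF p vwp_poles qpow_nonzero qpow_nonzero qpow_nonzero z]])
qed

lemma qshift_summand_eq:
  fixes q :: real and a b c d \<alpha> \<beta> \<gamma> \<delta> :: complex
  assumes "0 < q"
  shows "(1 - qpow q (4 * of_nat n + 2 * a + 2 * \<alpha>))
              * qshift (q^2) \<alpha> (a + of_nat n) * qshift (q^2) \<beta> (of_nat n - b)
              * qshift (q^2) \<gamma> (of_nat n - c) * qshift (q^2) \<delta> (of_nat n - d)
           / ((1 - of_real (q^2)) * qfact (q^2) n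
              * qshift (q^2) (1 + \<alpha> - \<beta>) (a + b + of_nat n)
              * qshift (q^2) (1 + \<alpha> - \<gamma>) (a + c + of_nat n)
              * qshift (q^2) (1 + \<alpha> - \<delta>) (a + d + of_nat n))
           * qpow q (2 * (a + b + c + d + 1 + \<alpha> - \<beta> - \<gamma> - \<delta>) * of_nat n)
      = qgamma (q^2) (1 + \<alpha> - \<beta>) * qgamma (q^2) (1 + \<alpha> - \<gamma>) * qgamma (q^2) (1 + \<alpha> - \<delta>)
          / (qgamma (q^2) \<alpha> * qgamma (q^2) \<beta> * qgamma (q^2) \<gamma> * qgamma (q^2) \<delta>)
        * vwp_qgamma_term (q^2) (\<alpha> + a) (\<beta> - b) (\<gamma> - c) (\<delta> - d) n"
proof -
  have args: "4 * of_nat n + 2 * a + 2 * \<alpha> = 2 * ((\<alpha> + a) + 2 * of_nat n)"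
    "2 * (a + b + c + d + 1 + \<alpha> - \<beta> - \<gamma> - \<delta>) * of_nat n
       = 2 * ((1 + (\<alpha> + a) - (\<beta> - b) - (\<gamma> - c) - (\<delta> - d)) * of_nat n)"
    "\<alpha> + (a + of_nat n) = (\<alpha> + a) + of_nat n" "\<beta> + (of_nat n - b) = (\<beta> - b) + of_nat n"
    "\<gamma> + (of_nat n - c) = (\<gamma> - c) + of_nat n" "\<delta> + (of_nat n - d) = (\<delta> - d) + of_nat n"
    "1 + \<alpha> - \<beta> + (a + b + of_nat n) = 1 + (\<alpha> + a) - (\<beta> - b) + of_nat n"
    "1 + \<alpha> - \<gamma> + (a + c + of_nat n) = 1 + (\<alpha> + a) - (\<gamma> - c) + of_nat n"
    "1 + \<alpha> - \<delta> + (a + d + of_nat n) = 1 + (\<alpha> + a) - (\<delta> - d) + of_nat n"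
    by (simp_all add: algebra_simps)
  show ?thesis
    unfolding qshift_def args unfolding vwp_qgamma_term_def qpow_double[OF assms]
    by (simp add: divide_inverse inverse_mult_distrib mult_ac)
qed

lemma qshift_value_eq:
  fixes p :: real and a b c d \<alpha> \<beta> \<gamma> \<delta> :: complex
  assumes "\<forall>x \<in> {\<alpha>, \<beta>, \<gamma>, \<delta>, 2 + \<alpha> - \<beta> - \<gamma> - \<delta>,
            1 + \<alpha> - \<beta> - \<gamma>, 1 + \<alpha> - \<beta> - \<delta>, 1 + \<alpha> - \<gamma> - \<delta>}. qgamma p x \<noteq> 0"
  shows "qgamma p (1 + \<alpha> - \<beta>) * qgamma p (1 + \<alpha> - \<gamma>)
        * qgamma p (1 + \<alpha> - \<delta>) * qgamma p (2 + \<alpha> - \<beta> - \<gamma> - \<delta>)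
      / (qgamma p \<alpha> * qgamma p (1 + \<alpha> - \<beta> - \<gamma>)
        * qgamma p (1 + \<alpha> - \<beta> - \<delta>) * qgamma p (1 + \<alpha> - \<gamma> - \<delta>))
      * ((qshift p \<beta> (- b) * qshift p \<gamma> (- c) * qshift p \<delta> (- d)
          * qshift p (2 + \<alpha> - \<beta> - \<gamma> - \<delta>) (a + b + c + d - 1))
        / (qshift p (1 + \<alpha> - \<beta> - \<gamma>) (a + b + c)
          * qshift p (1 + \<alpha> - \<beta> - \<delta>) (a + b + d)
          * qshift p (1 + \<alpha> - \<gamma> - \<delta>) (a + c + d)))
    = qgamma p (1 + \<alpha> - \<beta>) * qgamma p (1 + \<alpha> - \<gamma>) * qgamma p (1 + \<alpha> - \<delta>)
          / (qgamma p \<alpha> * qgamma p \<beta> * qgamma p \<gamma> * qgamma p \<delta>)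
      * (qgamma p (\<beta> - b) * qgamma p (\<gamma> - c) * qgamma p (\<delta> - d)
           * qgamma p (1 + (\<alpha> + a) - (\<beta> - b) - (\<gamma> - c) - (\<delta> - d))
          / (qgamma p (1 + (\<alpha> + a) - (\<beta> - b) - (\<gamma> - c)) * qgamma p (1 + (\<alpha> + a) - (\<beta> - b) - (\<delta> - d))
             * qgamma p (1 + (\<alpha> + a) - (\<gamma> - c) - (\<delta> - d))))"
proof -
  have args: "\<beta> + - b = \<beta> - b" "\<gamma> + - c = \<gamma> - c" "\<delta> + - d = \<delta> - d"
    "2 + \<alpha> - \<beta> - \<gamma> - \<delta> + (a + b + c + d - 1) = 1 + (\<alpha> + a) - (\<beta> - b) - (\<gamma> - c) - (\<delta> - d)"
    "1 + \<alpha> - \<beta> - \<gamma> + (a + b + c) = 1 + (\<alpha> + a) - (\<beta> - b) - (\<gamma> - c)"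
    "1 + \<alpha> - \<beta> - \<delta> + (a + b + d) = 1 + (\<alpha> + a) - (\<beta> - b) - (\<delta> - d)"
    "1 + \<alpha> - \<gamma> - \<delta> + (a + c + d) = 1 + (\<alpha> + a) - (\<gamma> - c) - (\<delta> - d)"
    by (simp_all add: algebra_simps)
  show ?thesis
    unfolding qshift_def args using assms by (simp add: field_simps)
qed

theorem theorem1p2:
  fixes q :: real and a b c d \<alpha> \<beta> \<gamma> \<delta> :: complex
  assumes "0 < q" "q < 1"
    and "Re (a + b + c + d + 1 + \<alpha> - \<beta> - \<gamma> - \<delta>) > 0"
    and "\<forall>n::nat. \<forall>x \<in> {\<alpha> + a + of_nat n, \<beta> + of_nat n - b, \<gamma> + of_nat n - c,
            \<delta> + of_nat n - d, 1 + \<alpha> - \<beta> + a + b + of_nat n,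
            1 + \<alpha> - \<gamma> + a + c + of_nat n, 1 + \<alpha> - \<delta> + a + d + of_nat n}.
            \<not> qgamma_pole (q^2) x"
    and "\<forall>x \<in> {\<alpha>, \<beta>, \<gamma>, \<delta>, 1 + \<alpha> - \<beta>, 1 + \<alpha> - \<gamma>, 1 + \<alpha> - \<delta>,
            2 + \<alpha> - \<beta> - \<gamma> - \<delta>, 1 + \<alpha> - \<beta> - \<gamma>, 1 + \<alpha> - \<beta> - \<delta>,
            1 + \<alpha> - \<gamma> - \<delta>, \<beta> - b, \<gamma> - c, \<delta> - d,
            2 + \<alpha> - \<beta> - \<gamma> - \<delta> + (a + b + c + d - 1),
            1 + \<alpha> - \<beta> - \<gamma> + (a + b + c), 1 + \<alpha> - \<beta> - \<delta> + (a + b + d),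
            1 + \<alpha> - \<gamma> - \<delta> + (a + c + d)}. \<not> qgamma_pole (q^2) x"
  defines "A \<equiv> 2 * (a + b + c + d + 1 + \<alpha> - \<beta> - \<gamma> - \<delta>)"
  shows "(\<lambda>n. (1 - qpow q (4 * of_nat n + 2 * a + 2 * \<alpha>))
              * qshift (q^2) \<alpha> (a + of_nat n) * qshift (q^2) \<beta> (of_nat n - b)
              * qshift (q^2) \<gamma> (of_nat n - c) * qshift (q^2) \<delta> (of_nat n - d)
           / ((1 - complex_of_real (q^2)) * qfact (q^2) n
              * qshift (q^2) (1 + \<alpha> - \<beta>) (a + b + of_nat n)
              * qshift (q^2) (1 + \<alpha> - \<gamma>) (a + c + of_nat n)
              * qshift (q^2) (1 + \<alpha> - \<delta>) (a + d + of_nat n))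
           * qpow q (A * of_nat n))
    sums
     ((qgamma (q^2) (1 + \<alpha> - \<beta>) * qgamma (q^2) (1 + \<alpha> - \<gamma>)
        * qgamma (q^2) (1 + \<alpha> - \<delta>) * qgamma (q^2) (2 + \<alpha> - \<beta> - \<gamma> - \<delta>))
      / (qgamma (q^2) \<alpha> * qgamma (q^2) (1 + \<alpha> - \<beta> - \<gamma>)
        * qgamma (q^2) (1 + \<alpha> - \<beta> - \<delta>) * qgamma (q^2) (1 + \<alpha> - \<gamma> - \<delta>))
      * ((qshift (q^2) \<beta> (- b) * qshift (q^2) \<gamma> (- c) * qshift (q^2) \<delta> (- d)
          * qshift (q^2) (2 + \<alpha> - \<beta> - \<gamma> - \<delta>) (a + b + c + d - 1))
        / (qshift (q^2) (1 + \<alpha> - \<beta> - \<gamma>) (a + b + c)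
          * qshift (q^2) (1 + \<alpha> - \<beta> - \<delta>) (a + b + d)
          * qshift (q^2) (1 + \<alpha> - \<gamma> - \<delta>) (a + c + d))))"
proof -
  have p: "0 < q^2" "q^2 < 1"
    using assms(1,2) by (simp_all add: power_less_one_iff)
  have "\<forall>x \<in> {\<alpha> + a, \<beta> - b, \<gamma> - c, \<delta> - d, 1 + (\<alpha> + a) - (\<beta> - b), 1 + (\<alpha> + a) - (\<gamma> - c),
      1 + (\<alpha> + a) - (\<delta> - d), 1 + (\<alpha> + a) - (\<beta> - b) - (\<gamma> - c), 1 + (\<alpha> + a) - (\<beta> - b) - (\<delta> - d),
      1 + (\<alpha> + a) - (\<gamma> - c) - (\<delta> - d)}. \<not> qgamma_pole (q^2) x"
    using spec[OF assms(4), of 0] assms(5) by (simp add: algebra_simps)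
  moreover have "Re (1 + (\<alpha> + a) - (\<beta> - b) - (\<gamma> - c) - (\<delta> - d)) > 0"
    using assms(3) by (simp add: algebra_simps)
  ultimately have sums: "vwp_qgamma_term (q^2) (\<alpha> + a) (\<beta> - b) (\<gamma> - c) (\<delta> - d) sums
      (qgamma (q^2) (\<beta> - b) * qgamma (q^2) (\<gamma> - c) * qgamma (q^2) (\<delta> - d)
       * qgamma (q^2) (1 + (\<alpha> + a) - (\<beta> - b) - (\<gamma> - c) - (\<delta> - d))
       / (qgamma (q^2) (1 + (\<alpha> + a) - (\<beta> - b) - (\<gamma> - c))
          * qgamma (q^2) (1 + (\<alpha> + a) - (\<beta> - b) - (\<delta> - d))
          * qgamma (q^2) (1 + (\<alpha> + a) - (\<gamma> - c) - (\<delta> - d))))"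
    by (intro vwp_qgamma_sums p)
  have nonzero: "\<forall>x \<in> {\<alpha>, \<beta>, \<gamma>, \<delta>, 2 + \<alpha> - \<beta> - \<gamma> - \<delta>,
      1 + \<alpha> - \<beta> - \<gamma>, 1 + \<alpha> - \<beta> - \<delta>, 1 + \<alpha> - \<gamma> - \<delta>}. qgamma (q^2) x \<noteq> 0"
    using assms(5) qgamma_nonzero[OF p] by simp
  show ?thesis
    unfolding A_def qshift_summand_eq[OF assms(1)] qshift_value_eq[OF nonzero]
    by (rule sums_mult[OF sums])
qed

end
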